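(* Let $R$ be a ring in which the set $\operatorname{Nil}(R)$ of nilpotent elements is a subring. Then every idempotent of the factor ring $R/\operatorname{Nil}^*(R)$ is central in $R/\operatorname{Nil}^*(R)$.
   Context: Rings are associative and not necessarily unital. $\operatorname{Nil}^*(R)$ denotes the upper nilradical of $R$, i.e. the sum of all nil two-sided ideals of $R$. *)

theory Defs
  imports Main
begin

text \<open>Rings are associative, not necessarily unital: Isabelle's type class ring
(semiring + ab_group_add) has no unit. Positive powers are defined explicitly.\<close>

fun rpow :: "'a::ring \<Rightarrow> nat \<Rightarrow> 'a" where
  "rpow x 0 = x"
| "rpow x (Suc n) = x * rpow x n"
(* rpow x n = x^(n+1) *)

definition nilpotent_el :: "'a::ring \<Rightarrow> bool" where
  "nilpotent_el x \<longleftrightarrow> (\<exists>n. rpow x n = 0)"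

definition Nil_set :: "'a::ring set" where
  "Nil_set = {x. nilpotent_el x}"

definition is_subring :: "'a::ring set \<Rightarrow> bool" where
  "is_subring S \<longleftrightarrow> 0 \<in> S \<and> (\<forall>x\<in>S. \<forall>y\<in>S. x + y \<in> S \<and> x - y \<in> S \<and> x * y \<in> S)"

definition is_ideal :: "'a::ring set \<Rightarrow> bool" where
  "is_ideal I \<longleftrightarrow> 0 \<in> I \<and> (\<forall>x\<in>I. \<forall>y\<in>I. x - y \<in> I)
     \<and> (\<forall>x\<in>I. \<forall>r. r * x \<in> I \<and> x * r \<in> I)"

definition nil_ideal :: "'a::ring set \<Rightarrow> bool" where
  "nil_ideal I \<longleftrightarrow> is_ideal I \<and> I \<subseteq> Nil_set"

text \<open>Upper nilradical: the sum of all nil two-sided ideals, i.e. the smallest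
ideal containing every nil ideal.\<close>
definition upper_nilradical :: "'a::ring set" where
  "upper_nilradical = \<Inter>{J. is_ideal J \<and> (\<forall>I. nil_ideal I \<longrightarrow> I \<subseteq> J)}"

definition coset :: "'a::ring set \<Rightarrow> 'a \<Rightarrow> 'a set" where
  "coset I x = {x + i | i. i \<in> I}"

definition quot_carrier :: "'a::ring set \<Rightarrow> 'a set set" where
  "quot_carrier I = {coset I x | x. True}"

definition quot_mult :: "'a::ring set \<Rightarrow> 'a set \<Rightarrow> 'a set \<Rightarrow> 'a set" where
  "quot_mult I A B = coset I ((SOME a. a \<in> A) * (SOME b. b \<in> B))"

end

theory Submission imports Defs begin

text \<open>If the nilpotent elements form a subring, then \<open>Nil\<^sup>*(R)\<close> is the largest ideal all of
whose elements are nilpotent, i.e. the set of \<open>x\<close> such that \<open>x\<close>, \<open>a x\<close>, \<open>x b\<close>, \<open>a x b\<close> are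
nilpotent for all \<open>a, b\<close>. In \<open>R/Nil\<^sup>*(R)\<close> the image \<open>M\<close> of the nilpotents is a subring
containing every square-zero element. For an idempotent \<open>e\<close> the Peirce corners \<open>e s - e s e\<close>
and \<open>s e - e s e\<close> square to zero, and every product of the form \<open>a (e r - r e) b\<close> is a sum of
products of such corners, so it lies in \<open>M\<close>. Pulling back to \<open>R\<close>, \<open>e r - r e\<close> generates a
nil ideal and hence lies in \<open>Nil\<^sup>*(R)\<close>.\<close>

lemma is_ideal_diff: "is_ideal I \<Longrightarrow> x \<in> I \<Longrightarrow> y \<in> I \<Longrightarrow> x - y \<in> I"
  unfolding is_ideal_def by blast

lemma is_ideal_uminus: "is_ideal I \<Longrightarrow> x \<in> I \<Longrightarrow> - x \<in> I"
  unfolding is_ideal_def by (metis diff_0)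

lemma is_ideal_add: "is_ideal I \<Longrightarrow> x \<in> I \<Longrightarrow> y \<in> I \<Longrightarrow> x + y \<in> I"
  unfolding is_ideal_def by (metis diff_0 diff_minus_eq_add)

lemma is_ideal_upper_nilradical: "is_ideal (upper_nilradical :: 'a::ring set)"
  unfolding upper_nilradical_def is_ideal_def by blast

lemma is_subring_image:
  assumes S: "is_subring S"
    and "f 0 = 0" "\<And>x y. f (x + y) = f x + f y" "\<And>x y. f (x - y) = f x - f y"
    "\<And>x y. f (x * y) = f x * f y"
  shows "is_subring (f ` S)"
  unfolding is_subring_def
proof (intro conjI ballI)
  show "0 \<in> f ` S" using S assms(2) unfolding is_subring_def by (metis image_eqI)
  fix x y assume "x \<in> f ` S" "y \<in> f ` S"
  then obtain x' y' where "x' \<in> S" "y' \<in> S" "x = f x'" "y = f y'" by blast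
  then show "x + y \<in> f ` S" "x - y \<in> f ` S" "x * y \<in> f ` S"
    using S unfolding is_subring_def by (auto simp flip: assms(3-))
qed

lemma coset_eq_iff:
  assumes I: "is_ideal I"
  shows "coset I x = coset I y \<longleftrightarrow> x - y \<in> I"
proof
  assume "coset I x = coset I y"
  moreover have "x \<in> coset I x" unfolding coset_def using I unfolding is_ideal_def by force
  ultimately obtain i where "i \<in> I" "x = y + i" unfolding coset_def by auto
  then show "x - y \<in> I" by simp
next
  have shift: "z \<in> coset I u" if "z \<in> coset I v" "u - v \<in> I" for z u v
  proof -
    from that obtain i where i: "i \<in> I" "z = v + i" unfolding coset_def by auto
    have "i - (u - v) \<in> I" using i that(2) I unfolding is_ideal_def by blast
    moreover have "z = u + (i - (u - v))" using i by (simp add: algebra_simps)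
    ultimately show ?thesis unfolding coset_def by blast
  qed
  assume "x - y \<in> I"
  moreover from this have "y - x \<in> I" using is_ideal_uminus[OF I] by fastforce
  ultimately show "coset I x = coset I y" using shift by blast
qed

lemma some_in_coset_diff:
  assumes I: "is_ideal I"
  shows "(SOME a. a \<in> coset I x) - x \<in> I"
proof -
  have "x \<in> coset I x" unfolding coset_def using I unfolding is_ideal_def by force
  then have "(SOME a. a \<in> coset I x) \<in> coset I x" by (rule someI)
  then show ?thesis unfolding coset_def by auto
qed

definition ideal_core :: "'a::ring set \<Rightarrow> 'a set" where
  "ideal_core S = {x. x \<in> S \<and> (\<forall>a. a * x \<in> S) \<and> (\<forall>b. x * b \<in> S) \<and> (\<forall>a b. a * x * b \<in> S)}"

lemma ideal_core_subset: "ideal_core S \<subseteq> S"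
  unfolding ideal_core_def by blast

lemma is_ideal_ideal_core:
  assumes "0 \<in> S" and "\<And>x y. x \<in> S \<Longrightarrow> y \<in> S \<Longrightarrow> x - y \<in> S"
  shows "is_ideal (ideal_core S)"
  unfolding is_ideal_def
proof (intro conjI ballI allI)
  show "0 \<in> ideal_core S" using assms(1) unfolding ideal_core_def by simp
  fix x y r assume x: "x \<in> ideal_core S"
  then show "r * x \<in> ideal_core S" "x * r \<in> ideal_core S"
    unfolding ideal_core_def by (simp_all flip: mult.assoc) (simp add: mult.assoc)
  assume "y \<in> ideal_core S"
  with x show "x - y \<in> ideal_core S"
    unfolding ideal_core_def by (simp add: assms(2) right_diff_distrib left_diff_distrib)
qed

lemma ideal_subset_ideal_core:
  assumes "is_ideal I" and "I \<subseteq> S"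
  shows "I \<subseteq> ideal_core S"
  using assms unfolding is_ideal_def ideal_core_def by blast

lemma ideal_core_vimage:
  assumes mult: "\<And>a b. f (a * b) = f a * f b"
    and x: "f x \<in> ideal_core M"
  shows "x \<in> ideal_core (f -` M)"
  using x unfolding ideal_core_def by (simp add: mult)

lemma upper_nilradical_eq_ideal_core:
  assumes "is_subring (Nil_set :: 'a::ring set)"
  shows "(upper_nilradical :: 'a set) = ideal_core Nil_set"
proof -
  have core_ideal: "is_ideal (ideal_core (Nil_set :: 'a set))"
    by (rule is_ideal_ideal_core) (use assms in \<open>auto simp: is_subring_def\<close>)
  show ?thesis
  proof
    show "upper_nilradical \<subseteq> ideal_core (Nil_set :: 'a set)"
      unfolding upper_nilradical_def nil_ideal_def
      using core_ideal ideal_subset_ideal_core by blast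
    show "ideal_core Nil_set \<subseteq> (upper_nilradical :: 'a set)"
      unfolding upper_nilradical_def nil_ideal_def
      using core_ideal ideal_core_subset by blast
  qed
qed

lemma rpow_square: "rpow (x * x) n = rpow x (Suc (2 * n))"
  by (induction n) (simp_all add: mult.assoc)

lemma nilpotent_el_square: "nilpotent_el (x * x) \<Longrightarrow> nilpotent_el x"
  unfolding nilpotent_el_def by (metis rpow_square)

lemma idempotent_commutator_in_ideal_core:
  fixes e r :: "'a::ring"
  assumes ee: "e * e = e"
    and M: "is_subring M"
    and square_zero: "\<And>x. x * x = 0 \<Longrightarrow> x \<in> M"
  shows "e * r - r * e \<in> ideal_core M"
proof -
  have add: "x + y \<in> M" and diff: "x - y \<in> M" and mult: "x * y \<in> M"
    if "x \<in> M" "y \<in> M" for x y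
    using M that unfolding is_subring_def by blast+
  have ee': "e * (e * x) = e * x" for x using ee by (metis mult.assoc)
  define U where "U s = e * s - e * s * e" for s
  define V where "V s = s * e - e * s * e" for s
  have UM: "U s \<in> M" and VM: "V s \<in> M" for s
    by (rule square_zero, simp add: U_def V_def algebra_simps ee')+
  \<comment> \<open>a multiple of a corner is a corner plus a product of two corners\<close>
  have aU: "a * U s = U (a * e * s) + V a * U s" for a s
    by (simp add: U_def V_def algebra_simps ee')
  have Ub: "U s * b = U s * V b + U (s * b - s * e * b)" for s b
    by (simp add: U_def V_def algebra_simps ee')
  have Vb: "V s * b = V (s * e * b) + V s * U b" for s b
    by (simp add: U_def V_def algebra_simps ee')
  have aV: "a * V s = U a * V s + V (a * s - a * e * s)" for a s
    by (simp add: U_def V_def algebra_simps ee')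
  have UbM: "U s * b \<in> M" and VbM: "V s * b \<in> M" for s b
    by (subst Ub Vb, intro add mult UM VM)+
  have aUM: "a * U s \<in> M" and aVM: "a * V s \<in> M" for a s
    by (subst aU aV, intro add mult UM VM)+
  have aUbM: "a * U s * b \<in> M" for a s b
  proof -
    have "a * U s * b = U (a * e * s) * b + V a * (U s * b)"
      by (subst aU) (simp add: distrib_right mult.assoc)
    also have "\<dots> \<in> M" by (intro add mult UbM VM)
    finally show ?thesis .
  qed
  have aVbM: "a * V s * b \<in> M" for a s b
  proof -
    have "a * V s * b = U a * (V s * b) + V (a * s - a * e * s) * b"
      by (subst aV) (simp add: distrib_right mult.assoc)
    also have "\<dots> \<in> M" by (intro add mult UM VbM)
    finally show ?thesis .
  qed
  have "e * r - r * e = U r - V r" by (simp add: U_def V_def)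
  then show ?thesis
    unfolding ideal_core_def
    by (simp add: right_diff_distrib left_diff_distrib diff UM VM aUM aVM UbM VbM aUbM aVbM)
qed

definition nilrad_cong :: "'a::ring \<Rightarrow> 'a \<Rightarrow> bool" where
  "nilrad_cong x y \<longleftrightarrow> x - y \<in> (upper_nilradical :: 'a set)"

lemma equivp_nilrad_cong: "equivp (nilrad_cong :: 'a::ring \<Rightarrow> 'a \<Rightarrow> bool)"
proof (rule equivpI)
  note I = is_ideal_upper_nilradical[where 'a = 'a]
  show "reflp (nilrad_cong :: 'a \<Rightarrow> 'a \<Rightarrow> bool)"
    using I unfolding reflp_def nilrad_cong_def is_ideal_def by simp
  show "symp (nilrad_cong :: 'a \<Rightarrow> 'a \<Rightarrow> bool)"
    unfolding symp_def nilrad_cong_def by (metis I is_ideal_uminus minus_diff_eq)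
  show "transp (nilrad_cong :: 'a \<Rightarrow> 'a \<Rightarrow> bool)"
    unfolding transp_def nilrad_cong_def
  proof (intro allI impI)
    fix x y z :: 'a
    assume "x - y \<in> upper_nilradical" "y - z \<in> upper_nilradical"
    then have "(x - y) + (y - z) \<in> upper_nilradical" by (rule is_ideal_add[OF I])
    then show "x - z \<in> upper_nilradical" by simp
  qed
qed

quotient_type (overloaded) 'a nilrad_quot = "'a::ring" / nilrad_cong
  by (rule equivp_nilrad_cong)

instantiation nilrad_quot :: (ring) ring
begin

lift_definition zero_nilrad_quot :: "'a nilrad_quot" is 0 .

lift_definition plus_nilrad_quot :: "'a nilrad_quot \<Rightarrow> 'a nilrad_quot \<Rightarrow> 'a nilrad_quot"
  is "(+)"
proof -
  fix a b c d :: 'a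
  assume "nilrad_cong a b" "nilrad_cong c d"
  moreover have "a + c - (b + d) = (a - b) + (c - d)" by (simp add: algebra_simps)
  ultimately show "nilrad_cong (a + c) (b + d)"
    unfolding nilrad_cong_def by (metis is_ideal_add is_ideal_upper_nilradical)
qed

lift_definition uminus_nilrad_quot :: "'a nilrad_quot \<Rightarrow> 'a nilrad_quot" is uminus
proof -
  fix a b :: 'a
  assume "nilrad_cong a b"
  moreover have "- a - - b = - (a - b)" by simp
  ultimately show "nilrad_cong (- a) (- b)"
    unfolding nilrad_cong_def by (metis is_ideal_uminus is_ideal_upper_nilradical)
qed

lift_definition minus_nilrad_quot :: "'a nilrad_quot \<Rightarrow> 'a nilrad_quot \<Rightarrow> 'a nilrad_quot"
  is "(-)"
proof -
  fix a b c d :: 'a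
  assume "nilrad_cong a b" "nilrad_cong c d"
  moreover have "a - c - (b - d) = (a - b) - (c - d)" by (simp add: algebra_simps)
  ultimately show "nilrad_cong (a - c) (b - d)"
    unfolding nilrad_cong_def by (metis is_ideal_diff is_ideal_upper_nilradical)
qed

lift_definition times_nilrad_quot :: "'a nilrad_quot \<Rightarrow> 'a nilrad_quot \<Rightarrow> 'a nilrad_quot"
  is "(*)"
proof -
  fix a b c d :: 'a
  assume "nilrad_cong a b" "nilrad_cong c d"
  then have "(a - b) * c \<in> upper_nilradical" "b * (c - d) \<in> upper_nilradical"
    using is_ideal_upper_nilradical unfolding nilrad_cong_def is_ideal_def by blast+
  moreover have "a * c - b * d = (a - b) * c + b * (c - d)" by (simp add: algebra_simps)
  ultimately show "nilrad_cong (a * c) (b * d)"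
    unfolding nilrad_cong_def by (metis is_ideal_add is_ideal_upper_nilradical)
qed

instance
  by intro_classes (transfer, simp add: nilrad_cong_def algebra_simps
      is_ideal_upper_nilradical[unfolded is_ideal_def])+

end

lemma abs_nilrad_quot_hom:
  "abs_nilrad_quot (x + y) = abs_nilrad_quot x + abs_nilrad_quot y"
  "abs_nilrad_quot (x - y) = abs_nilrad_quot x - abs_nilrad_quot y"
  "abs_nilrad_quot (x * y) = abs_nilrad_quot x * abs_nilrad_quot y"
  "abs_nilrad_quot 0 = 0"
  by (simp_all add: plus_nilrad_quot.abs_eq minus_nilrad_quot.abs_eq
      times_nilrad_quot.abs_eq zero_nilrad_quot.abs_eq)

lemma abs_nilrad_quot_eq_iff:
  "abs_nilrad_quot x = abs_nilrad_quot y \<longleftrightarrow> x - y \<in> upper_nilradical"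
  by (simp add: nilrad_quot.abs_eq_iff nilrad_cong_def)

lemma idempotent_mod_upper_nilradical_commutes:
  assumes sub: "is_subring (Nil_set :: 'a::ring set)"
    and e: "e * e - e \<in> (upper_nilradical :: 'a set)"
  shows "e * r - r * e \<in> (upper_nilradical :: 'a set)"
proof -
  let ?M = "abs_nilrad_quot ` (Nil_set :: 'a set)"
  have Nil_add: "x + y \<in> Nil_set" if "x \<in> Nil_set" "y \<in> Nil_set" for x y :: 'a
    using sub that unfolding is_subring_def by blast
  have nilrad_Nil: "(upper_nilradical :: 'a set) \<subseteq> Nil_set"
    using upper_nilradical_eq_ideal_core[OF sub] ideal_core_subset by blast
  have vimage_M: "abs_nilrad_quot -` ?M = Nil_set"
  proof (intro equalityI subsetI)
    fix x assume "x \<in> abs_nilrad_quot -` ?M"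
    then obtain y where y: "y \<in> Nil_set" "abs_nilrad_quot x = abs_nilrad_quot y" by auto
    then have "x - y \<in> Nil_set" using abs_nilrad_quot_eq_iff nilrad_Nil by blast
    then have "(x - y) + y \<in> Nil_set" using Nil_add y(1) by blast
    then show "x \<in> Nil_set" by simp
  qed auto
  have "abs_nilrad_quot e * abs_nilrad_quot e = abs_nilrad_quot e"
    using e by (simp add: abs_nilrad_quot_eq_iff flip: abs_nilrad_quot_hom(3))
  moreover have "is_subring ?M"
    using sub by (rule is_subring_image) (simp_all add: abs_nilrad_quot_hom)
  moreover have "x \<in> ?M" if "x * x = 0" for x :: "'a nilrad_quot"
  proof -
    obtain x' where x': "x = abs_nilrad_quot x'" by (metis Quotient_nilrad_quot Quotient_abs_rep)
    have "abs_nilrad_quot (x' * x') = abs_nilrad_quot 0"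
      using that unfolding x' abs_nilrad_quot_hom .
    then have "x' * x' \<in> Nil_set"
      using nilrad_Nil by (auto simp only: abs_nilrad_quot_eq_iff diff_zero)
    then have "x' \<in> Nil_set"
      unfolding Nil_set_def mem_Collect_eq by (rule nilpotent_el_square)
    then show ?thesis unfolding x' by (rule imageI)
  qed
  ultimately have "abs_nilrad_quot e * abs_nilrad_quot r - abs_nilrad_quot r * abs_nilrad_quot e
      \<in> ideal_core ?M"
    by (rule idempotent_commutator_in_ideal_core)
  then have "abs_nilrad_quot (e * r - r * e) \<in> ideal_core ?M"
    by (simp only: abs_nilrad_quot_hom)
  then have "e * r - r * e \<in> ideal_core (abs_nilrad_quot -` ?M)"
    by (rule ideal_core_vimage[OF abs_nilrad_quot_hom(3)])
  then have "e * r - r * e \<in> ideal_core Nil_set"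
    unfolding vimage_M .
  then show ?thesis using upper_nilradical_eq_ideal_core[OF sub] by simp
qed

theorem proposition3p1:
  assumes "is_subring (Nil_set :: 'a::ring set)"
  shows "\<forall>E\<in>quot_carrier (upper_nilradical :: 'a set).
           quot_mult upper_nilradical E E = E \<longrightarrow>
           (\<forall>A\<in>quot_carrier upper_nilradical.
              quot_mult upper_nilradical E A = quot_mult upper_nilradical A E)"
proof (intro ballI impI)
  let ?I = "upper_nilradical :: 'a set"
  note I = is_ideal_upper_nilradical[where 'a = 'a]
  fix E A assume E: "E \<in> quot_carrier ?I" and EE: "quot_mult ?I E E = E"
    and A: "A \<in> quot_carrier ?I"
  obtain x where x: "E = coset ?I x" using E unfolding quot_carrier_def by auto
  obtain y where y: "A = coset ?I y" using A unfolding quot_carrier_def by auto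
  define e where "e = (SOME a. a \<in> coset ?I x)"
  define r where "r = (SOME a. a \<in> coset ?I y)"
  have "coset ?I e = E"
    unfolding x coset_eq_iff[OF I] e_def by (rule some_in_coset_diff[OF I])
  then have "coset ?I (e * e) = coset ?I e"
    using EE unfolding quot_mult_def x e_def by simp
  then have "e * e - e \<in> ?I" using coset_eq_iff[OF I] by blast
  then have "e * r - r * e \<in> ?I" by (rule idempotent_mod_upper_nilradical_commutes[OF assms])
  then show "quot_mult ?I E A = quot_mult ?I A E"
    unfolding quot_mult_def x y e_def[symmetric] r_def[symmetric] coset_eq_iff[OF I] .
qed

end
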